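(* Let $\mathcal{A}$ be a finite-dimensional $\mathbb{C}^*$-weak Hopf algebra, $\rho:\mathcal{A}\to M_{d_\rho}(\mathbb{C})$ a $*$-representation and $(v_{ij})_{1\le i,j\le d_v}$ a corepresentation with $S(v_{ij})=v_{ji}^*$. Define $P$ on $\mathbb{C}^{d_v}\otimes\mathbb{C}^{d_\rho}$ and $Q$ on $\mathbb{C}^{d_\rho}\otimes\mathbb{C}^{d_v}$ by $\langle i,a|P|j,b\rangle=\sum\epsilon(1_{(1)}v_{ij})\rho_{ab}(1_{(2)})$ and $\langle a,i|Q|b,j\rangle=\sum\rho_{ab}(1_{(1)})\epsilon(v_{ij}1_{(2)})$, where $\Delta(1)=\sum1_{(1)}\otimes1_{(2)}$. Then on $\mathbb{C}^{d_v}\otimes\mathbb{C}^{d_\rho}\otimes\mathbb{C}^{d_v}$ one has $(P\otimes\mathbb{1})(\mathbb{1}\otimes Q)=(\mathbb{1}\otimes Q)(P\otimes\mathbb{1})$, and on $\mathbb{C}^{d_\rho}\otimes\mathbb{C}^{d_v}\otimes\mathbb{C}^{d_\rho}$ one has $(Q\otimes\mathbb{1})(\mathbb{1}\otimes P)=(\mathbb{1}\otimes P)(Q\otimes\mathbb{1})$.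
   Context: A weak bialgebra is a finite-dimensional unital associative algebra and coassociative counital coalgebra with $\Delta(xy)=\Delta(x)\Delta(y)$, $\Delta^{(2)}(1)=(1\otimes\Delta(1))(\Delta(1)\otimes1)=(\Delta(1)\otimes1)(1\otimes\Delta(1))$ and $\epsilon(xyz)=\sum\epsilon(xy_{(1)})\epsilon(y_{(2)}z)=\sum\epsilon(xy_{(2)})\epsilon(y_{(1)}z)$. With $\epsilon_s(x)=\sum1_{(1)}\epsilon(x1_{(2)})$, $\epsilon_t(x)=\sum\epsilon(1_{(1)}x)1_{(2)}$, a weak Hopf algebra has a linear $S$ with $\sum S(x_{(1)})x_{(2)}=\epsilon_s(x)$, $\sum x_{(1)}S(x_{(2)})=\epsilon_t(x)$, $\sum S(x_{(1)})x_{(2)}S(x_{(3)})=S(x)$. A $\mathbb{C}^*$-weak Hopf algebra has an antilinear involution $*$ with $(xy)^*=y^*x^*$, $\Delta(x^* )=\Delta(x)^*$, and a faithful $*$-representation. A $*$-representation satisfies $\rho(x^* )=\rho(x)^\dagger$; a corepresentation satisfies $\Delta(v_{ij})=\sum_kv_{ik}\otimes v_{kj}$, $\epsilon(v_{ij})=\delta_{ij}$. *)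

theory Defs
  imports Complex_Main
begin

text \<open>
  A finite-dimensional algebra/coalgebra A over the complex numbers is modelled
  by a chosen basis indexed by a finite type 'i: elements of A are coefficient
  vectors 'i \<Rightarrow> complex, elements of A \<otimes> A are 'i \<Rightarrow> 'i \<Rightarrow> complex,
  elements of A \<otimes> A \<otimes> A are 'i \<Rightarrow> 'i \<Rightarrow> 'i \<Rightarrow> complex.
  All structure maps are given by structure constants with respect to the basis
  (hence are automatically (anti)linear).
\<close>

definition bas :: "'i \<Rightarrow> 'i \<Rightarrow> complex" where
  "bas b = (\<lambda>k. if k = b then 1 else 0)"

definition amul :: "('i::finite \<Rightarrow> 'i \<Rightarrow> 'i \<Rightarrow> complex) \<Rightarrow> ('i \<Rightarrow> complex) \<Rightarrow> ('i \<Rightarrow> complex) \<Rightarrow> ('i \<Rightarrow> complex)" where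
  "amul M x y = (\<lambda>k. \<Sum>i\<in>UNIV. \<Sum>j\<in>UNIV. x i * y j * M i j k)"

definition comul :: "('i::finite \<Rightarrow> 'i \<Rightarrow> 'i \<Rightarrow> complex) \<Rightarrow> ('i \<Rightarrow> complex) \<Rightarrow> ('i \<Rightarrow> 'i \<Rightarrow> complex)" where
  "comul D x = (\<lambda>i j. \<Sum>k\<in>UNIV. x k * D k i j)"

definition cnt :: "('i::finite \<Rightarrow> complex) \<Rightarrow> ('i \<Rightarrow> complex) \<Rightarrow> complex" where
  "cnt E x = (\<Sum>k\<in>UNIV. x k * E k)"

definition lin :: "('i::finite \<Rightarrow> 'i \<Rightarrow> complex) \<Rightarrow> ('i \<Rightarrow> complex) \<Rightarrow> ('i \<Rightarrow> complex)" where
  "lin L x = (\<lambda>l. \<Sum>k\<in>UNIV. x k * L k l)"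

definition alin :: "('i::finite \<Rightarrow> 'i \<Rightarrow> complex) \<Rightarrow> ('i \<Rightarrow> complex) \<Rightarrow> ('i \<Rightarrow> complex)" where
  "alin T x = (\<lambda>l. \<Sum>k\<in>UNIV. cnj (x k) * T k l)"

definition tmul :: "('i::finite \<Rightarrow> 'i \<Rightarrow> 'i \<Rightarrow> complex) \<Rightarrow> ('i \<Rightarrow> 'i \<Rightarrow> complex) \<Rightarrow> ('i \<Rightarrow> 'i \<Rightarrow> complex) \<Rightarrow> ('i \<Rightarrow> 'i \<Rightarrow> complex)" where
  "tmul M X Y = (\<lambda>i j. \<Sum>a\<in>UNIV. \<Sum>b\<in>UNIV. \<Sum>a'\<in>UNIV. \<Sum>b'\<in>UNIV.
       X a b * Y a' b' * M a a' i * M b b' j)"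

definition t3mul :: "('i::finite \<Rightarrow> 'i \<Rightarrow> 'i \<Rightarrow> complex) \<Rightarrow> ('i \<Rightarrow> 'i \<Rightarrow> 'i \<Rightarrow> complex) \<Rightarrow> ('i \<Rightarrow> 'i \<Rightarrow> 'i \<Rightarrow> complex) \<Rightarrow> ('i \<Rightarrow> 'i \<Rightarrow> 'i \<Rightarrow> complex)" where
  "t3mul M X Y = (\<lambda>i j l. \<Sum>a\<in>UNIV. \<Sum>b\<in>UNIV. \<Sum>c\<in>UNIV. \<Sum>a'\<in>UNIV. \<Sum>b'\<in>UNIV. \<Sum>c'\<in>UNIV.
       X a b c * Y a' b' c' * M a a' i * M b b' j * M c c' l)"

definition comul_l :: "('i::finite \<Rightarrow> 'i \<Rightarrow> 'i \<Rightarrow> complex) \<Rightarrow> ('i \<Rightarrow> 'i \<Rightarrow> complex) \<Rightarrow> ('i \<Rightarrow> 'i \<Rightarrow> 'i \<Rightarrow> complex)" where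
  "comul_l D X = (\<lambda>i j l. \<Sum>a\<in>UNIV. X a l * D a i j)"

definition comul_r :: "('i::finite \<Rightarrow> 'i \<Rightarrow> 'i \<Rightarrow> complex) \<Rightarrow> ('i \<Rightarrow> 'i \<Rightarrow> complex) \<Rightarrow> ('i \<Rightarrow> 'i \<Rightarrow> 'i \<Rightarrow> complex)" where
  "comul_r D X = (\<lambda>i j l. \<Sum>a\<in>UNIV. X i a * D a j l)"

definition tstar :: "('i::finite \<Rightarrow> 'i \<Rightarrow> complex) \<Rightarrow> ('i \<Rightarrow> 'i \<Rightarrow> complex) \<Rightarrow> ('i \<Rightarrow> 'i \<Rightarrow> complex)" where
  "tstar T X = (\<lambda>i j. \<Sum>a\<in>UNIV. \<Sum>b\<in>UNIV. cnj (X a b) * T a i * T b j)"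

definition eps_s where
  "eps_s M D E u x = (\<lambda>k. \<Sum>a\<in>UNIV. \<Sum>b\<in>UNIV. comul D u a b * bas a k * cnt E (amul M x (bas b)))"

definition eps_t where
  "eps_t M D E u x = (\<lambda>k. \<Sum>a\<in>UNIV. \<Sum>b\<in>UNIV. comul D u a b * cnt E (amul M (bas a) x) * bas b k)"

definition weak_bialgebra ::
  "('i::finite \<Rightarrow> 'i \<Rightarrow> 'i \<Rightarrow> complex) \<Rightarrow> ('i \<Rightarrow> complex) \<Rightarrow> ('i \<Rightarrow> 'i \<Rightarrow> 'i \<Rightarrow> complex) \<Rightarrow> ('i \<Rightarrow> complex) \<Rightarrow> bool" where
  "weak_bialgebra M u D E \<longleftrightarrow>
     (\<forall>x y z. amul M (amul M x y) z = amul M x (amul M y z)) \<and>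
     (\<forall>x. amul M u x = x \<and> amul M x u = x) \<and>
     (\<forall>x. comul_l D (comul D x) = comul_r D (comul D x)) \<and>
     (\<forall>x. (\<lambda>j. \<Sum>a\<in>UNIV. comul D x a j * E a) = x) \<and>
     (\<forall>x. (\<lambda>i. \<Sum>b\<in>UNIV. comul D x i b * E b) = x) \<and>
     (\<forall>x y. comul D (amul M x y) = tmul M (comul D x) (comul D y)) \<and>
     (let U2 = comul D u;
          L = (\<lambda>i j l. U2 i j * u l);
          R = (\<lambda>i j l. u i * U2 j l)
      in comul_l D U2 = t3mul M R L \<and> comul_l D U2 = t3mul M L R) \<and>
     (\<forall>x y z. cnt E (amul M (amul M x y) z) =
         (\<Sum>a\<in>UNIV. \<Sum>b\<in>UNIV. comul D y a b * cnt E (amul M x (bas a)) * cnt E (amul M (bas b) z))) \<and>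
     (\<forall>x y z. cnt E (amul M (amul M x y) z) =
         (\<Sum>a\<in>UNIV. \<Sum>b\<in>UNIV. comul D y a b * cnt E (amul M x (bas b)) * cnt E (amul M (bas a) z)))"

text \<open>antipode S = lin Sm\<close>
definition weak_hopf ::
  "('i::finite \<Rightarrow> 'i \<Rightarrow> 'i \<Rightarrow> complex) \<Rightarrow> ('i \<Rightarrow> complex) \<Rightarrow> ('i \<Rightarrow> 'i \<Rightarrow> 'i \<Rightarrow> complex) \<Rightarrow> ('i \<Rightarrow> complex)
   \<Rightarrow> ('i \<Rightarrow> 'i \<Rightarrow> complex) \<Rightarrow> bool" where
  "weak_hopf M u D E Sm \<longleftrightarrow> weak_bialgebra M u D E \<and>
     (\<forall>x. (\<lambda>k. \<Sum>a\<in>UNIV. \<Sum>b\<in>UNIV. comul D x a b * amul M (lin Sm (bas a)) (bas b) k) = eps_s M D E u x) \<and>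
     (\<forall>x. (\<lambda>k. \<Sum>a\<in>UNIV. \<Sum>b\<in>UNIV. comul D x a b * amul M (bas a) (lin Sm (bas b)) k) = eps_t M D E u x) \<and>
     (\<forall>x. (\<lambda>k. \<Sum>a\<in>UNIV. \<Sum>b\<in>UNIV. \<Sum>c\<in>UNIV. comul_l D (comul D x) a b c *
            amul M (amul M (lin Sm (bas a)) (bas b)) (lin Sm (bas c)) k) = lin Sm x)"

text \<open>linear map A \<rightarrow> matrices given by the images R k of the basis vectors;
  only entries with indices < d are meaningful\<close>
definition repm :: "('i::finite \<Rightarrow> nat \<Rightarrow> nat \<Rightarrow> complex) \<Rightarrow> ('i \<Rightarrow> complex) \<Rightarrow> nat \<Rightarrow> nat \<Rightarrow> complex" where
  "repm R x = (\<lambda>a b. \<Sum>k\<in>UNIV. x k * R k a b)"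

definition star_rep ::
  "('i::finite \<Rightarrow> 'i \<Rightarrow> 'i \<Rightarrow> complex) \<Rightarrow> ('i \<Rightarrow> 'i \<Rightarrow> complex) \<Rightarrow> nat \<Rightarrow> ('i \<Rightarrow> nat \<Rightarrow> nat \<Rightarrow> complex) \<Rightarrow> bool" where
  "star_rep M T d R \<longleftrightarrow>
     (\<forall>x y a b. a < d \<longrightarrow> b < d \<longrightarrow>
        repm R (amul M x y) a b = (\<Sum>c<d. repm R x a c * repm R y c b)) \<and>
     (\<forall>x a b. a < d \<longrightarrow> b < d \<longrightarrow> repm R (alin T x) a b = cnj (repm R x b a))"

definition cstar_weak_hopf ::
  "('i::finite \<Rightarrow> 'i \<Rightarrow> 'i \<Rightarrow> complex) \<Rightarrow> ('i \<Rightarrow> complex) \<Rightarrow> ('i \<Rightarrow> 'i \<Rightarrow> 'i \<Rightarrow> complex) \<Rightarrow> ('i \<Rightarrow> complex)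
   \<Rightarrow> ('i \<Rightarrow> 'i \<Rightarrow> complex) \<Rightarrow> ('i \<Rightarrow> 'i \<Rightarrow> complex) \<Rightarrow> bool" where
  "cstar_weak_hopf M u D E Sm T \<longleftrightarrow> weak_hopf M u D E Sm \<and>
     (\<forall>x. alin T (alin T x) = x) \<and>
     (\<forall>x y. alin T (amul M x y) = amul M (alin T y) (alin T x)) \<and>
     (\<forall>x. comul D (alin T x) = tstar T (comul D x)) \<and>
     (\<exists>n R. star_rep M T n R \<and>
        (\<forall>x. (\<forall>a<n. \<forall>b<n. repm R x a b = 0) \<longrightarrow> x = (\<lambda>_. 0)))"

definition corep ::
  "('i::finite \<Rightarrow> 'i \<Rightarrow> 'i \<Rightarrow> complex) \<Rightarrow> ('i \<Rightarrow> complex) \<Rightarrow> nat \<Rightarrow> (nat \<Rightarrow> nat \<Rightarrow> 'i \<Rightarrow> complex) \<Rightarrow> bool" where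
  "corep D E dv v \<longleftrightarrow>
     (\<forall>i<dv. \<forall>j<dv. comul D (v i j) = (\<lambda>a b. \<Sum>k<dv. v i k a * v k j b)) \<and>
     (\<forall>i<dv. \<forall>j<dv. cnt E (v i j) = (if i = j then 1 else 0))"

text \<open>P: <i,a|P|j,b> (stored as P i a j b); Q: <a,i|Q|b,j> (stored as Q a i b j)\<close>
definition Pop where
  "Pop M u D E R v = (\<lambda>i a j b. \<Sum>x\<in>UNIV. \<Sum>y\<in>UNIV.
      comul D u x y * cnt E (amul M (bas x) (v i j)) * repm R (bas y) a b)"

definition Qop where
  "Qop M u D E R v = (\<lambda>a i b j. \<Sum>x\<in>UNIV. \<Sum>y\<in>UNIV.
      comul D u x y * repm R (bas x) a b * cnt E (amul M (v i j) (bas y)))"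

text \<open>operators on C^d1 \<otimes> C^d2 \<otimes> C^d3 as entry functions <i,a,k|X|j,b,l> = X i a k j b l\<close>
definition ext_r :: "(nat \<Rightarrow> nat \<Rightarrow> nat \<Rightarrow> nat \<Rightarrow> complex) \<Rightarrow> nat \<Rightarrow> nat \<Rightarrow> nat \<Rightarrow> nat \<Rightarrow> nat \<Rightarrow> nat \<Rightarrow> complex" where
  "ext_r X = (\<lambda>i a k j b l. X i a j b * (if k = l then 1 else 0))"

definition ext_l :: "(nat \<Rightarrow> nat \<Rightarrow> nat \<Rightarrow> nat \<Rightarrow> complex) \<Rightarrow> nat \<Rightarrow> nat \<Rightarrow> nat \<Rightarrow> nat \<Rightarrow> nat \<Rightarrow> nat \<Rightarrow> complex" where
  "ext_l Y = (\<lambda>i a k j b l. (if i = j then 1 else 0) * Y a k b l)"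

definition comp3 :: "nat \<Rightarrow> nat \<Rightarrow> nat \<Rightarrow> (nat \<Rightarrow> nat \<Rightarrow> nat \<Rightarrow> nat \<Rightarrow> nat \<Rightarrow> nat \<Rightarrow> complex)
   \<Rightarrow> (nat \<Rightarrow> nat \<Rightarrow> nat \<Rightarrow> nat \<Rightarrow> nat \<Rightarrow> nat \<Rightarrow> complex) \<Rightarrow> nat \<Rightarrow> nat \<Rightarrow> nat \<Rightarrow> nat \<Rightarrow> nat \<Rightarrow> nat \<Rightarrow> complex" where
  "comp3 d1 d2 d3 X Y = (\<lambda>i a k j b l. \<Sum>j'<d1. \<Sum>b'<d2. \<Sum>k'<d3. X i a k j' b' k' * Y j' b' k' j b l)"

end

theory Submission
  imports Defs
begin

(* Write 1_(1) (x) 1_(2) and 1'_(1) (x) 1'_(2) for two copies of Delta(1).  Contracting the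
   middle rho-index and using multiplicativity of rho, the two products in the first identity
   become  eps(1_(1) v_ij) rho_ab(1_(2) 1'_(1)) eps(v_kl 1'_(2))  and the same expression with
   1'_(1) 1_(2) in the middle; they agree by the weak unit axiom
   (Delta(1) (x) 1)(1 (x) Delta(1)) = (1 (x) Delta(1))(Delta(1) (x) 1).
   In the second identity the middle index is that of the corepresentation: since
   Delta(v_ij) = sum_k v_ik (x) v_kj, the two forms of weak multiplicativity of the counit,
   eps(x y z) = eps(x y_(1)) eps(y_(2) z) = eps(x y_(2)) eps(y_(1) z), turn both products into
   rho_ab(1_(1)) eps(1'_(1) v_ij 1_(2)) rho_ce(1'_(2)). *)

lemma sum_swap_past2:
  "(\<Sum>z\<in>Z. \<Sum>p\<in>A. \<Sum>q\<in>B. f z p q) = (\<Sum>p\<in>A. \<Sum>q\<in>B. \<Sum>z\<in>Z. f z p q)"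
  by (simp only: sum.swap[of _ Z])

lemma sum_swap_past4:
  "(\<Sum>z\<in>Z. \<Sum>p\<in>A. \<Sum>q\<in>B. \<Sum>r\<in>C. \<Sum>s\<in>D. f z p q r s)
    = (\<Sum>p\<in>A. \<Sum>q\<in>B. \<Sum>r\<in>C. \<Sum>s\<in>D. \<Sum>z\<in>Z. f z p q r s)"
  by (simp only: sum.swap[of _ Z])

lemma sum_swap_pairs:
  "(\<Sum>p\<in>A. \<Sum>q\<in>B. \<Sum>r\<in>C. \<Sum>s\<in>D. f p q r s)
    = (\<Sum>r\<in>C. \<Sum>s\<in>D. \<Sum>p\<in>A. \<Sum>q\<in>B. f p q r s)"
  by (simp only: sum.swap[of _ A], simp only: sum.swap[of _ B])

lemma bas_mult [simp]:
  "bas b k * c = (if k = b then c else 0)"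
  "c * bas b k = (if k = b then c else 0)"
  by (simp_all add: bas_def)

lemma if_zero_mult [simp]:
  fixes a c :: "'a::mult_zero"
  shows "(if P then a else 0) * c = (if P then a * c else 0)"
    and "c * (if P then a else 0) = (if P then c * a else 0)"
  by simp_all

lemma sum_if_zero [simp]: "(\<Sum>j\<in>A. if P then f j else 0) = (if P then sum f A else 0)"
  by simp

lemma repm_bas [simp]: "repm R (bas y) = R y"
  by (simp add: repm_def fun_eq_iff)

lemma amul_bas [simp]: "amul M (bas x) (bas y) = M x y"
  by (simp add: amul_def)

lemma cnt_amul_linear_left:
  "cnt E (amul M w Z) = (\<Sum>b\<in>UNIV. w b * cnt E (amul M (bas b) Z))"
  unfolding cnt_def amul_def sum_distrib_left sum_distrib_right
  by (rule trans[OF sum.swap]) (simp add: sum.delta mult_ac)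

lemma cnt_amul_linear_right:
  "cnt E (amul M X w) = (\<Sum>b\<in>UNIV. w b * cnt E (amul M X (bas b)))"
  unfolding cnt_def amul_def sum_distrib_left sum_distrib_right
  by (rule trans[OF sum_swap_past2[symmetric]]) (simp add: sum.delta mult_ac)

lemma amul_unit_left_coords:
  assumes "\<And>x. amul M u x = x"
  shows "(\<Sum>a'\<in>UNIV. u a' * M a' a p) = bas a p"
  using assms[of "bas a"] by (simp add: amul_def fun_eq_iff mult.commute)

lemma amul_unit_right_coords:
  assumes "\<And>x. amul M x u = x"
  shows "(\<Sum>a'\<in>UNIV. u a' * M a a' p) = bas a p"
  using assms[of "bas a"] by (simp add: amul_def fun_eq_iff)

(* Coordinates of (U (x) 1)(1 (x) V) = U_(1) (x) U_(2) V_(1) (x) V_(2) and of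
   (1 (x) U)(V (x) 1) = V_(1) (x) U_(1) V_(2) (x) U_(2). *)
lemma t3mul_tensor_unit_coords:
  assumes "\<And>x. amul M u x = x" "\<And>x. amul M x u = x"
  shows "t3mul M (\<lambda>i j l. U i j * u l) (\<lambda>i j l. u i * V j l) p q r
     = (\<Sum>y\<in>UNIV. \<Sum>x'\<in>UNIV. U p y * V x' r * M y x' q)"
proof -
  have "t3mul M (\<lambda>i j l. U i j * u l) (\<lambda>i j l. u i * V j l) p q r =
    (\<Sum>a\<in>UNIV. \<Sum>b\<in>UNIV. \<Sum>b'\<in>UNIV. \<Sum>c'\<in>UNIV. U a b * V b' c' * M b b' q
       * (\<Sum>a'\<in>UNIV. u a' * M a a' p) * (\<Sum>c\<in>UNIV. u c * M c c' r))"
    unfolding t3mul_def sum_distrib_left sum_distrib_right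
    by (rule sum.cong[OF refl], rule sum.cong[OF refl], subst sum_swap_pairs)
      (simp add: mult_ac)
  also have "\<dots> = (\<Sum>a\<in>UNIV. \<Sum>b\<in>UNIV. \<Sum>b'\<in>UNIV. \<Sum>c'\<in>UNIV.
      U a b * V b' c' * M b b' q * bas a p * bas c' r)"
    by (simp add: amul_unit_right_coords amul_unit_left_coords assms)
  also have "\<dots> = (\<Sum>y\<in>UNIV. \<Sum>x'\<in>UNIV. U p y * V x' r * M y x' q)"
    by (simp add: sum.delta)
  finally show ?thesis .
qed

lemma t3mul_unit_tensor_coords:
  assumes "\<And>x. amul M u x = x" "\<And>x. amul M x u = x"
  shows "t3mul M (\<lambda>i j l. u i * U j l) (\<lambda>i j l. V i j * u l) p q r
     = (\<Sum>y\<in>UNIV. \<Sum>x'\<in>UNIV. V p y * U x' r * M x' y q)"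
proof -
  have "t3mul M (\<lambda>i j l. u i * U j l) (\<lambda>i j l. V i j * u l) p q r =
    (\<Sum>b\<in>UNIV. \<Sum>c\<in>UNIV. \<Sum>a'\<in>UNIV. \<Sum>b'\<in>UNIV. U b c * V a' b' * M b b' q
       * (\<Sum>c'\<in>UNIV. u c' * M c c' r) * (\<Sum>a\<in>UNIV. u a * M a a' p))"
    unfolding t3mul_def sum_distrib_left sum_distrib_right
    by (rule trans[OF sum_swap_past4]) (simp add: mult_ac)
  also have "\<dots> = (\<Sum>b\<in>UNIV. \<Sum>c\<in>UNIV. \<Sum>a'\<in>UNIV. \<Sum>b'\<in>UNIV.
      U b c * V a' b' * M b b' q * bas c r * bas a' p)"
    by (simp add: amul_unit_right_coords amul_unit_left_coords assms)
  also have "\<dots> = (\<Sum>y\<in>UNIV. \<Sum>x'\<in>UNIV. V p y * U x' r * M x' y q)"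
    by (simp add: sum.delta mult_ac) (rule sum.swap)
  finally show ?thesis .
qed

lemma weak_bialgebra_unit:
  assumes "weak_bialgebra M u D E"
  shows "amul M u x = x" "amul M x u = x"
  using assms unfolding weak_bialgebra_def by simp_all

(* The weak unit axiom paired with f (x) g (x) h:
   sum f(1_(1)) g(1_(2) 1'_(1)) h(1'_(2)) = sum f(1_(1)) g(1'_(1) 1_(2)) h(1'_(2)). *)
lemma weak_bialgebra_comul_unit_pairing:
  fixes M :: "'i::finite \<Rightarrow> 'i \<Rightarrow> 'i \<Rightarrow> complex"
  assumes wb: "weak_bialgebra M u D E"
  defines "U \<equiv> comul D u"
  shows "(\<Sum>x\<in>UNIV. \<Sum>y\<in>UNIV. \<Sum>x'\<in>UNIV. \<Sum>y'\<in>UNIV.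
            U x y * U x' y' * f x * (\<Sum>q\<in>UNIV. M y x' q * g q) * h y')
       = (\<Sum>x\<in>UNIV. \<Sum>y\<in>UNIV. \<Sum>x'\<in>UNIV. \<Sum>y'\<in>UNIV.
            U x y * U x' y' * f x * (\<Sum>q\<in>UNIV. M x' y q * g q) * h y')"
proof -
  have regroup: "(\<Sum>p\<in>UNIV. \<Sum>r\<in>UNIV. \<Sum>q\<in>UNIV.
      (\<Sum>y\<in>UNIV. \<Sum>x'\<in>UNIV. A p y x' r * B y x' q) * (f p * g q * h r))
    = (\<Sum>p\<in>UNIV. \<Sum>y\<in>UNIV. \<Sum>x'\<in>UNIV. \<Sum>r\<in>UNIV.
      A p y x' r * f p * (\<Sum>q\<in>UNIV. B y x' q * g q) * h r)"
    for A :: "'i \<Rightarrow> 'i \<Rightarrow> 'i \<Rightarrow> 'i \<Rightarrow> complex" and B :: "'i \<Rightarrow> 'i \<Rightarrow> 'i \<Rightarrow> complex"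
    unfolding sum_distrib_left sum_distrib_right
    by (rule sum.cong[OF refl], rule trans[OF sum_swap_pairs]) (simp add: mult_ac)
  have unit_commute: "(\<Sum>y\<in>UNIV. \<Sum>x'\<in>UNIV. U p y * U x' r * M y x' q)
      = (\<Sum>y\<in>UNIV. \<Sum>x'\<in>UNIV. U p y * U x' r * M x' y q)" for p q r
  proof -
    have "t3mul M (\<lambda>i j l. U i j * u l) (\<lambda>i j l. u i * U j l)
        = t3mul M (\<lambda>i j l. u i * U j l) (\<lambda>i j l. U i j * u l)"
      using wb unfolding weak_bialgebra_def Let_def U_def by metis
    then have "t3mul M (\<lambda>i j l. U i j * u l) (\<lambda>i j l. u i * U j l) p q r
        = t3mul M (\<lambda>i j l. u i * U j l) (\<lambda>i j l. U i j * u l) p q r"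
      by simp
    then show ?thesis
      by (simp only: t3mul_tensor_unit_coords[OF weak_bialgebra_unit[OF wb]]
          t3mul_unit_tensor_coords[OF weak_bialgebra_unit[OF wb]])
  qed
  have "(\<Sum>x\<in>UNIV. \<Sum>y\<in>UNIV. \<Sum>x'\<in>UNIV. \<Sum>y'\<in>UNIV.
            U x y * U x' y' * f x * (\<Sum>q\<in>UNIV. M y x' q * g q) * h y')
      = (\<Sum>p\<in>UNIV. \<Sum>r\<in>UNIV. \<Sum>q\<in>UNIV.
          (\<Sum>y\<in>UNIV. \<Sum>x'\<in>UNIV. U p y * U x' r * M y x' q) * (f p * g q * h r))"
    by (simp only: regroup)
  also have "\<dots> = (\<Sum>p\<in>UNIV. \<Sum>r\<in>UNIV. \<Sum>q\<in>UNIV.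
          (\<Sum>y\<in>UNIV. \<Sum>x'\<in>UNIV. U p y * U x' r * M x' y q) * (f p * g q * h r))"
    by (simp only: unit_commute)
  also have "\<dots> = (\<Sum>x\<in>UNIV. \<Sum>y\<in>UNIV. \<Sum>x'\<in>UNIV. \<Sum>y'\<in>UNIV.
            U x y * U x' y' * f x * (\<Sum>q\<in>UNIV. M x' y q * g q) * h y')"
    by (simp only: regroup)
  finally show ?thesis .
qed

lemma weak_bialgebra_cnt_mult:
  assumes "weak_bialgebra M u D E"
  shows "cnt E (amul M (amul M x y) z) = (\<Sum>a\<in>UNIV. \<Sum>b\<in>UNIV.
           comul D y a b * cnt E (amul M x (bas a)) * cnt E (amul M (bas b) z))"
    and "cnt E (amul M (amul M x y) z) = (\<Sum>a\<in>UNIV. \<Sum>b\<in>UNIV.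
           comul D y a b * cnt E (amul M x (bas b)) * cnt E (amul M (bas a) z))"
  using assms unfolding weak_bialgebra_def by blast+

lemma cnt_amul_corep:
  assumes wb: "weak_bialgebra M u D E" and vco: "corep D E dv v" and "i < dv" "j < dv"
  shows "cnt E (amul M (amul M X (v i j)) Z)
    = (\<Sum>k<dv. cnt E (amul M X (v i k)) * cnt E (amul M (v k j) Z))"
proof -
  have "cnt E (amul M (amul M X (v i j)) Z) = (\<Sum>a\<in>UNIV. \<Sum>b\<in>UNIV. \<Sum>k<dv.
      (v i k a * cnt E (amul M X (bas a))) * (v k j b * cnt E (amul M (bas b) Z)))"
    using vco \<open>i < dv\<close> \<open>j < dv\<close> unfolding weak_bialgebra_cnt_mult(1)[OF wb] corep_def
    by (simp add: sum_distrib_left sum_distrib_right mult_ac)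
  also have "\<dots> = (\<Sum>k<dv. cnt E (amul M X (v i k)) * cnt E (amul M (v k j) Z))"
    by (rule trans[OF sum_swap_past2[symmetric]])
      (simp only: sum_product[symmetric] cnt_amul_linear_right[symmetric]
        cnt_amul_linear_left[symmetric])
  finally show ?thesis .
qed

lemma cnt_amul_corep':
  assumes wb: "weak_bialgebra M u D E" and vco: "corep D E dv v" and "i < dv" "j < dv"
  shows "cnt E (amul M (amul M X (v i j)) Z)
    = (\<Sum>k<dv. cnt E (amul M (v i k) Z) * cnt E (amul M X (v k j)))"
proof -
  have "cnt E (amul M (amul M X (v i j)) Z) = (\<Sum>a\<in>UNIV. \<Sum>b\<in>UNIV. \<Sum>k<dv.
      (v i k a * cnt E (amul M (bas a) Z)) * (v k j b * cnt E (amul M X (bas b))))"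
    using vco \<open>i < dv\<close> \<open>j < dv\<close> unfolding weak_bialgebra_cnt_mult(2)[OF wb] corep_def
    by (simp add: sum_distrib_left sum_distrib_right mult_ac)
  also have "\<dots> = (\<Sum>k<dv. cnt E (amul M (v i k) Z) * cnt E (amul M X (v k j)))"
    by (rule trans[OF sum_swap_past2[symmetric]])
      (simp only: sum_product[symmetric] cnt_amul_linear_right[symmetric]
        cnt_amul_linear_left[symmetric])
  finally show ?thesis .
qed

lemma star_rep_mult_bas:
  assumes "star_rep M T d R" "a < d" "b < d"
  shows "(\<Sum>c<d. R y a c * R x c b) = (\<Sum>q\<in>UNIV. M y x q * R q a b)"
proof -
  have "repm R (amul M (bas y) (bas x)) a b
      = (\<Sum>c<d. repm R (bas y) a c * repm R (bas x) c b)"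
    using assms unfolding star_rep_def by blast
  then show ?thesis by (simp add: repm_def)
qed

lemma comp3_ext_r_ext_l:
  assumes "j < d1" "k < d3"
  shows "comp3 d1 d2 d3 (ext_r X) (ext_l Y) i a k j b l = (\<Sum>c<d2. X i a j c * Y c k b l)"
proof -
  have "comp3 d1 d2 d3 (ext_r X) (ext_l Y) i a k j b l =
    (\<Sum>c<d2. \<Sum>j'<d1. \<Sum>k'<d3.
       if k' = k then if j' = j then X i a j c * Y c k b l else 0 else 0)"
    unfolding comp3_def ext_r_def ext_l_def by (subst sum.swap) (intro sum.cong; simp)
  with assms show ?thesis by (simp add: sum.delta)
qed

lemma comp3_ext_l_ext_r:
  assumes "i < d1" "l < d3"
  shows "comp3 d1 d2 d3 (ext_l Y) (ext_r X) i a k j b l = (\<Sum>c<d2. Y a k c l * X i c j b)"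
proof -
  have "comp3 d1 d2 d3 (ext_l Y) (ext_r X) i a k j b l =
    (\<Sum>c<d2. \<Sum>j'<d1. \<Sum>k'<d3.
       if k' = l then if j' = i then Y a k c l * X i c j b else 0 else 0)"
    unfolding comp3_def ext_r_def ext_l_def by (subst sum.swap) (intro sum.cong; simp)
  with assms show ?thesis by (simp add: sum.delta)
qed

lemma Pop_Qop_contract_rep:
  fixes M D :: "'i::finite \<Rightarrow> 'i \<Rightarrow> 'i \<Rightarrow> complex" and u :: "'i \<Rightarrow> complex"
  assumes rho: "star_rep M T dr R" and "a < dr" "b < dr"
  defines "U \<equiv> comul D u"
  shows "(\<Sum>c<dr. Pop M u D E R v i a j c * Qop M u D E R v c k b l)
    = (\<Sum>x\<in>UNIV. \<Sum>y\<in>UNIV. \<Sum>x'\<in>UNIV. \<Sum>y'\<in>UNIV.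
         U x y * U x' y' * cnt E (amul M (bas x) (v i j))
         * (\<Sum>q\<in>UNIV. M y x' q * R q a b) * cnt E (amul M (v k l) (bas y')))"
proof -
  have "(\<Sum>c<dr. Pop M u D E R v i a j c * Qop M u D E R v c k b l)
    = (\<Sum>c<dr. \<Sum>x\<in>UNIV. \<Sum>y\<in>UNIV. \<Sum>x'\<in>UNIV. \<Sum>y'\<in>UNIV.
         U x y * U x' y' * cnt E (amul M (bas x) (v i j))
         * (R y a c * R x' c b) * cnt E (amul M (v k l) (bas y')))"
    unfolding Pop_def Qop_def U_def repm_bas sum_distrib_right
    unfolding sum_distrib_left by (simp add: mult_ac)
  also have "\<dots> = (\<Sum>x\<in>UNIV. \<Sum>y\<in>UNIV. \<Sum>x'\<in>UNIV. \<Sum>y'\<in>UNIV.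
         U x y * U x' y' * cnt E (amul M (bas x) (v i j))
         * (\<Sum>c<dr. R y a c * R x' c b) * cnt E (amul M (v k l) (bas y')))"
    by (rule trans[OF sum_swap_past4]) (simp add: sum_distrib_left sum_distrib_right)
  finally show ?thesis
    using star_rep_mult_bas[OF rho \<open>a < dr\<close> \<open>b < dr\<close>] by simp
qed

lemma Qop_Pop_contract_rep:
  fixes M D :: "'i::finite \<Rightarrow> 'i \<Rightarrow> 'i \<Rightarrow> complex" and u :: "'i \<Rightarrow> complex"
  assumes rho: "star_rep M T dr R" and "a < dr" "b < dr"
  defines "U \<equiv> comul D u"
  shows "(\<Sum>c<dr. Qop M u D E R v a k c l * Pop M u D E R v i c j b)
    = (\<Sum>x\<in>UNIV. \<Sum>y\<in>UNIV. \<Sum>x'\<in>UNIV. \<Sum>y'\<in>UNIV.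
         U x y * U x' y' * cnt E (amul M (bas x) (v i j))
         * (\<Sum>q\<in>UNIV. M x' y q * R q a b) * cnt E (amul M (v k l) (bas y')))"
proof -
  have "(\<Sum>c<dr. Qop M u D E R v a k c l * Pop M u D E R v i c j b)
    = (\<Sum>c<dr. \<Sum>x'\<in>UNIV. \<Sum>y'\<in>UNIV. \<Sum>x\<in>UNIV. \<Sum>y\<in>UNIV.
         U x y * U x' y' * cnt E (amul M (bas x) (v i j))
         * (R x' a c * R y c b) * cnt E (amul M (v k l) (bas y')))"
    unfolding Pop_def Qop_def U_def repm_bas sum_distrib_right
    unfolding sum_distrib_left by (simp add: mult_ac)
  also have "\<dots> = (\<Sum>x'\<in>UNIV. \<Sum>y'\<in>UNIV. \<Sum>x\<in>UNIV. \<Sum>y\<in>UNIV.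
         U x y * U x' y' * cnt E (amul M (bas x) (v i j))
         * (\<Sum>c<dr. R x' a c * R y c b) * cnt E (amul M (v k l) (bas y')))"
    by (rule trans[OF sum_swap_past4]) (simp add: sum_distrib_left sum_distrib_right)
  also have "\<dots> = (\<Sum>x\<in>UNIV. \<Sum>y\<in>UNIV. \<Sum>x'\<in>UNIV. \<Sum>y'\<in>UNIV.
         U x y * U x' y' * cnt E (amul M (bas x) (v i j))
         * (\<Sum>c<dr. R x' a c * R y c b) * cnt E (amul M (v k l) (bas y')))"
    by (rule sum_swap_pairs)
  finally show ?thesis
    using star_rep_mult_bas[OF rho \<open>a < dr\<close> \<open>b < dr\<close>] by simp
qed

lemma Qop_Pop_contract_corep:
  fixes M D :: "'i::finite \<Rightarrow> 'i \<Rightarrow> 'i \<Rightarrow> complex" and u :: "'i \<Rightarrow> complex"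
  assumes wb: "weak_bialgebra M u D E" and vco: "corep D E dv v" and "i < dv" "j < dv"
  defines "U \<equiv> comul D u"
  shows "(\<Sum>k<dv. Qop M u D E R v a i b k * Pop M u D E R v k c j e)
    = (\<Sum>x\<in>UNIV. \<Sum>y\<in>UNIV. \<Sum>x'\<in>UNIV. \<Sum>y'\<in>UNIV.
         U x y * U x' y' * R x a b * R y' c e
         * cnt E (amul M (amul M (bas x') (v i j)) (bas y)))"
proof -
  have "(\<Sum>k<dv. Qop M u D E R v a i b k * Pop M u D E R v k c j e)
    = (\<Sum>k<dv. \<Sum>x\<in>UNIV. \<Sum>y\<in>UNIV. \<Sum>x'\<in>UNIV. \<Sum>y'\<in>UNIV.
         U x y * U x' y' * R x a b * R y' c e
         * (cnt E (amul M (v i k) (bas y)) * cnt E (amul M (bas x') (v k j))))"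
    unfolding Pop_def Qop_def U_def repm_bas sum_distrib_right
    unfolding sum_distrib_left by (simp add: mult_ac)
  also have "\<dots> = (\<Sum>x\<in>UNIV. \<Sum>y\<in>UNIV. \<Sum>x'\<in>UNIV. \<Sum>y'\<in>UNIV.
         U x y * U x' y' * R x a b * R y' c e
         * (\<Sum>k<dv. cnt E (amul M (v i k) (bas y)) * cnt E (amul M (bas x') (v k j))))"
    by (rule trans[OF sum_swap_past4]) (simp add: sum_distrib_left)
  finally show ?thesis
    by (simp add: cnt_amul_corep'[OF wb vco \<open>i < dv\<close> \<open>j < dv\<close>])
qed

lemma Pop_Qop_contract_corep:
  fixes M D :: "'i::finite \<Rightarrow> 'i \<Rightarrow> 'i \<Rightarrow> complex" and u :: "'i \<Rightarrow> complex"
  assumes wb: "weak_bialgebra M u D E" and vco: "corep D E dv v" and "i < dv" "j < dv"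
  defines "U \<equiv> comul D u"
  shows "(\<Sum>k<dv. Pop M u D E R v i c k e * Qop M u D E R v a k b j)
    = (\<Sum>x\<in>UNIV. \<Sum>y\<in>UNIV. \<Sum>x'\<in>UNIV. \<Sum>y'\<in>UNIV.
         U x y * U x' y' * R x a b * R y' c e
         * cnt E (amul M (amul M (bas x') (v i j)) (bas y)))"
proof -
  have "(\<Sum>k<dv. Pop M u D E R v i c k e * Qop M u D E R v a k b j)
    = (\<Sum>k<dv. \<Sum>x'\<in>UNIV. \<Sum>y'\<in>UNIV. \<Sum>x\<in>UNIV. \<Sum>y\<in>UNIV.
         U x y * U x' y' * R x a b * R y' c e
         * (cnt E (amul M (bas x') (v i k)) * cnt E (amul M (v k j) (bas y))))"
    unfolding Pop_def Qop_def U_def repm_bas sum_distrib_right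
    unfolding sum_distrib_left by (simp add: mult_ac)
  also have "\<dots> = (\<Sum>x'\<in>UNIV. \<Sum>y'\<in>UNIV. \<Sum>x\<in>UNIV. \<Sum>y\<in>UNIV.
         U x y * U x' y' * R x a b * R y' c e
         * (\<Sum>k<dv. cnt E (amul M (bas x') (v i k)) * cnt E (amul M (v k j) (bas y))))"
    by (rule trans[OF sum_swap_past4]) (simp add: sum_distrib_left)
  also have "\<dots> = (\<Sum>x'\<in>UNIV. \<Sum>y'\<in>UNIV. \<Sum>x\<in>UNIV. \<Sum>y\<in>UNIV.
         U x y * U x' y' * R x a b * R y' c e
         * cnt E (amul M (amul M (bas x') (v i j)) (bas y)))"
    by (simp add: cnt_amul_corep[OF wb vco \<open>i < dv\<close> \<open>j < dv\<close>])
  also have "\<dots> = (\<Sum>x\<in>UNIV. \<Sum>y\<in>UNIV. \<Sum>x'\<in>UNIV. \<Sum>y'\<in>UNIV.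
         U x y * U x' y' * R x a b * R y' c e
         * cnt E (amul M (amul M (bas x') (v i j)) (bas y)))"
    by (rule sum_swap_pairs)
  finally show ?thesis .
qed

theorem mainTheorem7:
  fixes M :: "'i::finite \<Rightarrow> 'i \<Rightarrow> 'i \<Rightarrow> complex" and u :: "'i \<Rightarrow> complex"
    and D :: "'i \<Rightarrow> 'i \<Rightarrow> 'i \<Rightarrow> complex" and E :: "'i \<Rightarrow> complex"
    and Sm :: "'i \<Rightarrow> 'i \<Rightarrow> complex" and T :: "'i \<Rightarrow> 'i \<Rightarrow> complex"
    and dr :: nat and R :: "'i \<Rightarrow> nat \<Rightarrow> nat \<Rightarrow> complex"
    and dv :: nat and v :: "nat \<Rightarrow> nat \<Rightarrow> 'i \<Rightarrow> complex"
  assumes hopf: "cstar_weak_hopf M u D E Sm T"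
    and rho: "star_rep M T dr R"
    and vco: "corep D E dv v"
    and vS: "\<forall>i<dv. \<forall>j<dv. lin Sm (v i j) = alin T (v j i)"
  shows "(\<forall>i<dv. \<forall>a<dr. \<forall>k<dv. \<forall>j<dv. \<forall>b<dr. \<forall>l<dv.
            comp3 dv dr dv (ext_r (Pop M u D E R v)) (ext_l (Qop M u D E R v)) i a k j b l
          = comp3 dv dr dv (ext_l (Qop M u D E R v)) (ext_r (Pop M u D E R v)) i a k j b l)
       \<and> (\<forall>a<dr. \<forall>i<dv. \<forall>c<dr. \<forall>b<dr. \<forall>j<dv. \<forall>e<dr.
            comp3 dr dv dr (ext_r (Qop M u D E R v)) (ext_l (Pop M u D E R v)) a i c b j e
          = comp3 dr dv dr (ext_l (Pop M u D E R v)) (ext_r (Qop M u D E R v)) a i c b j e)"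
proof -
  have wb: "weak_bialgebra M u D E"
    using hopf unfolding cstar_weak_hopf_def weak_hopf_def by blast
  have "comp3 dv dr dv (ext_r (Pop M u D E R v)) (ext_l (Qop M u D E R v)) i a k j b l
      = comp3 dv dr dv (ext_l (Qop M u D E R v)) (ext_r (Pop M u D E R v)) i a k j b l"
    if "i < dv" "a < dr" "k < dv" "j < dv" "b < dr" "l < dv" for i a k j b l
    using that by (simp add: comp3_ext_r_ext_l comp3_ext_l_ext_r Pop_Qop_contract_rep[OF rho]
        Qop_Pop_contract_rep[OF rho] weak_bialgebra_comul_unit_pairing[OF wb])
  moreover have "comp3 dr dv dr (ext_r (Qop M u D E R v)) (ext_l (Pop M u D E R v)) a i c b j e
      = comp3 dr dv dr (ext_l (Pop M u D E R v)) (ext_r (Qop M u D E R v)) a i c b j e"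
    if "a < dr" "i < dv" "c < dr" "b < dr" "j < dv" "e < dr" for a i c b j e
    using that by (simp add: comp3_ext_r_ext_l comp3_ext_l_ext_r
        Qop_Pop_contract_corep[OF wb vco] Pop_Qop_contract_corep[OF wb vco])
  ultimately show ?thesis by blast
qed

end
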